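(* Let $P_Z$ be a latent distribution and $\tau:\Theta\times\mathcal{Z}\to\mathbb{R}^p$ a simulator, and let $P_\theta$ denote the law of $\tau(\theta,Z)$, $Z\sim P_Z$. Suppose the observed data are $X_i^*=\tau(\theta^*,Z_i^* )$, $i=1,\dots,n$, with $Z_1^*,\dots,Z_n^*$ i.i.d. $P_Z$, and let $\mathbf{Z}_m=(Z_1,\dots,Z_m)$ be i.i.d. $P_Z$, independent of the $Z_i^*$. Assume: (i) there exists $C>0$ with $\|\theta_1-\theta_2\|\le C\,d_{SW}(P_{\theta_1},P_{\theta_2})$ for all $\theta_1,\theta_2\in\Theta$; (ii) for $\mathbf{Z}_k$ i.i.d. $P_Z$ of any size $k$, $\sup_{\theta\in\Theta}d_{SW}(\mathbb{Q}^\theta_k,P_\theta)=O_p(k^{-1/2})$, where $\mathbb{Q}^\theta_k=\frac1k\sum_{j=1}^k\delta_{\tau(\theta,Z_j)}$. Then any $\hat\theta_{m,n}\in\arg\min_{\theta\in\Theta}d_{SW}\big(\mathbb{Q}^\theta_m,\mathbb{P}_n\big)$, where $\mathbb{P}_n=\frac1n\sum_{i=1}^n\delta_{X_i^*}$ and $\mathbb{Q}^\theta_m$ uses $\mathbf{Z}_m$, satisfies $$\|\hat\theta_{m,n}-\theta^*\|=O_p(n^{-1/2}+m^{-1/2}).$$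
   Context: For probability measures $\mu,\nu$ on $\mathbb{R}^p$ with finite first moment, the sliced Wasserstein distance is $d_{SW}(\mu,\nu)=\int_{S^{p-1}}W_1(\mu_\omega,\nu_\omega)\,d\sigma(\omega)$, where $\sigma$ is the uniform probability measure on the unit sphere $S^{p-1}$, $\mu_\omega,\nu_\omega$ are the pushforwards of $\mu,\nu$ under $x\mapsto\omega^Tx$, and $W_1$ is the 1-Wasserstein distance on $\mathbb{R}$. $\delta_x$ is the Dirac mass at $x$. The minimizer is assumed to exist. *)

theory Defs
  imports "HOL-Probability.Probability"
begin

definition outer_prob :: "'a measure \<Rightarrow> 'a set \<Rightarrow> real" where
  "outer_prob M A = (INF B \<in> {B \<in> sets M. A \<inter> space M \<subseteq> B}. measure M B)"

definition emp_measure :: "nat \<Rightarrow> (nat \<Rightarrow> 'a::topological_space) \<Rightarrow> 'a measure" where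
  "emp_measure k x = distr (uniform_count_measure {..<k}) borel x"

text \<open>Uniform (normalised surface) probability measure on the unit sphere,
  obtained as the radial projection of the normalised Lebesgue measure on the unit ball.\<close>
definition sphere_unif :: "'a::euclidean_space measure" where
  "sphere_unif = distr (uniform_measure lborel (ball 0 1)) borel (\<lambda>x. x /\<^sub>R norm x)"

definition W1 :: "real measure \<Rightarrow> real measure \<Rightarrow> ennreal" where
  "W1 \<mu> \<nu> = (INF \<pi> \<in> {\<pi>. sets \<pi> = sets (borel \<Otimes>\<^sub>M borel) \<and>
                        distr \<pi> borel fst = \<mu> \<and> distr \<pi> borel snd = \<nu>}.
              \<integral>\<^sup>+ p. ennreal \<bar>fst p - snd p\<bar> \<partial>\<pi>)"

definition dSW :: "'a::euclidean_space measure \<Rightarrow> 'a measure \<Rightarrow> ennreal" where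
  "dSW \<mu> \<nu> = (\<integral>\<^sup>+ \<omega>. W1 (distr \<mu> borel (\<lambda>x. \<omega> \<bullet> x)) (distr \<nu> borel (\<lambda>x. \<omega> \<bullet> x)) \<partial>sphere_unif)"

end

theory Submission
  imports Defs
begin

text \<open>On the real line, W1 is the L1 distance of the distribution functions: any coupling costs at
  least that much (integrate over the thresholds t separating its two coordinates), and the quantile
  coupling attains it. So W1, and hence dSW, is a pseudometric on Borel probability measures.
  Let D_k be the uniform deviation sup_theta dSW(Q^theta_k, P_theta). The triangle inequality and the
  minimising property of the estimator give dSW(P_thetahat, P_thetastar) <= 2 D_m + 2 D_n, which
  identifiability turns into |thetahat - thetastar| <= 2C (D_m + D_n). The O_p(k^(-1/2)) bound on D_k,
  applied to both independent samples and combined by a union bound on the product space, gives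
  the rate.\<close>

lemma nn_integral_threshold_disagreement:
  fixes a b :: real
  shows "(\<integral>\<^sup>+t. indicator {t. (a \<le> t) \<noteq> (b \<le> t)} t \<partial>lborel) = ennreal \<bar>a - b\<bar>"
proof -
  have "{t. (a \<le> t) \<noteq> (b \<le> t)} = {min a b..<max a b}" by auto
  then show ?thesis by (simp add: max_def min_def)
qed

lemma (in finite_measure) abs_measure_diff_le_measure_sym_diff:
  assumes "A \<in> sets M" "B \<in> sets M"
  shows "\<bar>measure M A - measure M B\<bar> \<le> measure M ((A - B) \<union> (B - A))"
proof -
  have "measure M ((A - B) \<union> (B - A)) = measure M (A - B) + measure M (B - A)"
    using assms by (intro finite_measure_Union) auto
  moreover have "measure M (A - B) = measure M A - measure M (A \<inter> B)"
    and "measure M (B - A) = measure M B - measure M (A \<inter> B)"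
    using assms by (auto simp: finite_measure_Diff' Int_commute)
  ultimately show ?thesis
    using measure_nonneg[of M "A - B"] measure_nonneg[of M "B - A"] by linarith
qed

lemma cdf_l1_le_coupling_cost:
  fixes \<pi> :: "(real \<times> real) measure"
  assumes \<mu>: "real_distribution \<mu>" and sets_\<pi>: "sets \<pi> = sets (borel \<Otimes>\<^sub>M borel)"
    and fst_\<pi>: "distr \<pi> borel fst = \<mu>" and snd_\<pi>: "distr \<pi> borel snd = \<nu>"
  shows "(\<integral>\<^sup>+t. ennreal \<bar>cdf \<mu> t - cdf \<nu> t\<bar> \<partial>lborel) \<le> (\<integral>\<^sup>+p. ennreal \<bar>fst p - snd p\<bar> \<partial>\<pi>)"
proof -
  have fst_measurable[measurable]: "fst \<in> borel_measurable \<pi>"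
    and snd_measurable[measurable]: "snd \<in> borel_measurable \<pi>"
    by (simp_all add: measurable_cong_sets[OF sets_\<pi> refl])
  interpret prob_space \<pi>
    using prob_space_distrD[OF fst_measurable] \<mu> fst_\<pi> by (simp add: real_distribution_def)
  interpret pair_sigma_finite \<pi> lborel
    by (intro pair_sigma_finite.intro sigma_finite_measure_axioms lborel.sigma_finite_measure_axioms)
  define D where "D t = {p \<in> space \<pi>. (fst p \<le> t) \<noteq> (snd p \<le> t)}" for t
  have D_sets: "D t \<in> sets \<pi>" for t unfolding D_def by measurable
  have "ennreal \<bar>cdf \<mu> t - cdf \<nu> t\<bar> \<le> emeasure \<pi> (D t)" for t
  proof -
    let ?A = "{p \<in> space \<pi>. fst p \<le> t}" and ?B = "{p \<in> space \<pi>. snd p \<le> t}"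
    have "cdf \<mu> t = measure \<pi> ?A" "cdf \<nu> t = measure \<pi> ?B"
      unfolding cdf_def fst_\<pi>[symmetric] snd_\<pi>[symmetric]
      by (simp_all add: measure_distr vimage_def Int_def conj_commute)
    moreover have "(?A - ?B) \<union> (?B - ?A) = D t" unfolding D_def by auto
    moreover have "?A \<in> sets \<pi>" "?B \<in> sets \<pi>" by measurable
    ultimately show ?thesis
      using abs_measure_diff_le_measure_sym_diff[of ?A ?B] by (simp add: emeasure_eq_measure)
  qed
  then have "(\<integral>\<^sup>+t. ennreal \<bar>cdf \<mu> t - cdf \<nu> t\<bar> \<partial>lborel) \<le> (\<integral>\<^sup>+t. emeasure \<pi> (D t) \<partial>lborel)"
    by (rule nn_integral_mono)
  also have "\<dots> = (\<integral>\<^sup>+t. (\<integral>\<^sup>+p. indicator {t. (fst p \<le> t) \<noteq> (snd p \<le> t)} t \<partial>\<pi>) \<partial>lborel)"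
    using D_sets by (auto simp: nn_integral_indicator[symmetric] D_def indicator_def
        intro!: nn_integral_cong)
  also have "\<dots> = (\<integral>\<^sup>+p. (\<integral>\<^sup>+t. indicator {t. (fst p \<le> t) \<noteq> (snd p \<le> t)} t \<partial>lborel) \<partial>\<pi>)"
    by (rule Fubini') (unfold indicator_def, measurable)
  also have "\<dots> = (\<integral>\<^sup>+p. ennreal \<bar>fst p - snd p\<bar> \<partial>\<pi>)"
    by (simp only: nn_integral_threshold_disagreement)
  finally show ?thesis .
qed

definition quantile :: "real measure \<Rightarrow> real \<Rightarrow> real" where
  "quantile \<mu> u = Inf {x. u \<le> cdf \<mu> x}"

lemma (in real_distribution) quantile_le_iff:
  assumes "0 < u" "u < 1"
  shows "quantile M u \<le> x \<longleftrightarrow> u \<le> cdf M x"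
proof -
  interpret cdf_distribution M by (simp add: cdf_distribution_def real_distribution_axioms)
  show ?thesis unfolding quantile_def by (rule pseudoinverse[OF assms, symmetric])
qed

lemma (in real_distribution) measurable_quantile:
  "quantile M \<in> borel_measurable (restrict_space borel {0<..<1})"
proof -
  interpret cdf_distribution M by (simp add: cdf_distribution_def real_distribution_axioms)
  show ?thesis unfolding quantile_def[abs_def] by (rule measurable_CI)
qed

lemma (in real_distribution) distr_quantile:
  "distr (restrict_space lborel {0<..<1}) borel (quantile M) = M"
proof -
  interpret cdf_distribution M by (simp add: cdf_distribution_def real_distribution_axioms)
  show ?thesis unfolding quantile_def[abs_def] by (rule distr_I_eq_M)
qed

lemma W1_le_cdf_l1:
  assumes \<mu>: "real_distribution \<mu>" and \<nu>: "real_distribution \<nu>"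
  shows "W1 \<mu> \<nu> \<le> (\<integral>\<^sup>+t. ennreal \<bar>cdf \<mu> t - cdf \<nu> t\<bar> \<partial>lborel)"
proof -
  define \<Omega> where "\<Omega> = restrict_space lborel {0<..<1::real}"
  define q where "q u = (quantile \<mu> u, quantile \<nu> u)" for u
  interpret \<Omega>: prob_space \<Omega>
    unfolding \<Omega>_def by (auto simp: emeasure_restrict_space space_restrict_space intro!: prob_spaceI)
  interpret pair_sigma_finite \<Omega> lborel
    by (intro pair_sigma_finite.intro \<Omega>.sigma_finite_measure_axioms lborel.sigma_finite_measure_axioms)
  have sets_\<Omega>: "sets \<Omega> = sets (restrict_space borel {0<..<1})"
    unfolding \<Omega>_def by (simp add: sets_restrict_space)
  have [measurable]: "quantile \<mu> \<in> borel_measurable \<Omega>" "quantile \<nu> \<in> borel_measurable \<Omega>"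
    using real_distribution.measurable_quantile[OF \<mu>] real_distribution.measurable_quantile[OF \<nu>]
    by (simp_all add: measurable_cong_sets[OF sets_\<Omega> refl])
  have q_measurable: "q \<in> \<Omega> \<rightarrow>\<^sub>M borel \<Otimes>\<^sub>M borel" unfolding q_def by measurable
  have "W1 \<mu> \<nu> \<le> (\<integral>\<^sup>+p. ennreal \<bar>fst p - snd p\<bar> \<partial>distr \<Omega> (borel \<Otimes>\<^sub>M borel) q)"
    unfolding W1_def using q_measurable
      real_distribution.distr_quantile[OF \<mu>] real_distribution.distr_quantile[OF \<nu>]
    by (intro INF_lower) (simp add: distr_distr comp_def q_def \<Omega>_def)
  also have "\<dots> = (\<integral>\<^sup>+u. (\<integral>\<^sup>+t. indicator {t. (quantile \<mu> u \<le> t) \<noteq> (quantile \<nu> u \<le> t)} t \<partial>lborel) \<partial>\<Omega>)"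
    unfolding nn_integral_threshold_disagreement using q_measurable by (simp add: nn_integral_distr q_def)
  also have "\<dots> = (\<integral>\<^sup>+t. (\<integral>\<^sup>+u. indicator {t. (quantile \<mu> u \<le> t) \<noteq> (quantile \<nu> u \<le> t)} t \<partial>\<Omega>) \<partial>lborel)"
    by (rule Fubini'[symmetric]) (unfold indicator_def, measurable)
  also have "\<dots> \<le> (\<integral>\<^sup>+t. ennreal \<bar>cdf \<mu> t - cdf \<nu> t\<bar> \<partial>lborel)"
  proof (rule nn_integral_mono)
    fix t
    let ?lo = "min (cdf \<mu> t) (cdf \<nu> t)" and ?hi = "max (cdf \<mu> t) (cdf \<nu> t)"
    have "(\<integral>\<^sup>+u. indicator {t. (quantile \<mu> u \<le> t) \<noteq> (quantile \<nu> u \<le> t)} t \<partial>\<Omega>)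
        = (\<integral>\<^sup>+u. indicator {t. (quantile \<mu> u \<le> t) \<noteq> (quantile \<nu> u \<le> t)} t * indicator {0<..<1} u \<partial>lborel)"
      unfolding \<Omega>_def by (rule nn_integral_restrict_space) simp
    also have "\<dots> \<le> (\<integral>\<^sup>+u. indicator {?lo..?hi} u \<partial>lborel)"
    proof (rule nn_integral_mono)
      fix u
      show "indicator {t. (quantile \<mu> u \<le> t) \<noteq> (quantile \<nu> u \<le> t)} t * indicator {0<..<1} u
          \<le> (indicator {?lo..?hi} u :: ennreal)"
      proof (cases "0 < u \<and> u < 1")
        case True
        then show ?thesis
          using real_distribution.quantile_le_iff[OF \<mu>, of u t] real_distribution.quantile_le_iff[OF \<nu>, of u t]
          by (auto simp: indicator_def)
      qed (auto simp: indicator_def)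
    qed
    also have "\<dots> = ennreal \<bar>cdf \<mu> t - cdf \<nu> t\<bar>" by (simp add: max_def min_def)
    finally show "(\<integral>\<^sup>+u. indicator {t. (quantile \<mu> u \<le> t) \<noteq> (quantile \<nu> u \<le> t)} t \<partial>\<Omega>)
        \<le> ennreal \<bar>cdf \<mu> t - cdf \<nu> t\<bar>" .
  qed
  finally show ?thesis .
qed

theorem W1_eq_cdf_l1:
  assumes "real_distribution \<mu>" "real_distribution \<nu>"
  shows "W1 \<mu> \<nu> = (\<integral>\<^sup>+t. ennreal \<bar>cdf \<mu> t - cdf \<nu> t\<bar> \<partial>lborel)"
proof (rule antisym)
  show "W1 \<mu> \<nu> \<le> (\<integral>\<^sup>+t. ennreal \<bar>cdf \<mu> t - cdf \<nu> t\<bar> \<partial>lborel)"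
    by (rule W1_le_cdf_l1[OF assms])
  show "(\<integral>\<^sup>+t. ennreal \<bar>cdf \<mu> t - cdf \<nu> t\<bar> \<partial>lborel) \<le> W1 \<mu> \<nu>"
    unfolding W1_def
  proof (rule INF_greatest)
    fix \<pi> :: "(real \<times> real) measure"
    assume "\<pi> \<in> {\<pi>. sets \<pi> = sets (borel \<Otimes>\<^sub>M borel) \<and> distr \<pi> borel fst = \<mu> \<and> distr \<pi> borel snd = \<nu>}"
    then show "(\<integral>\<^sup>+t. ennreal \<bar>cdf \<mu> t - cdf \<nu> t\<bar> \<partial>lborel) \<le> (\<integral>\<^sup>+p. ennreal \<bar>fst p - snd p\<bar> \<partial>\<pi>)"
      using cdf_l1_le_coupling_cost[OF assms(1)] by blast
  qed
qed

lemma W1_commute: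
  assumes "real_distribution \<mu>" "real_distribution \<nu>"
  shows "W1 \<mu> \<nu> = W1 \<nu> \<mu>"
  using assms by (simp add: W1_eq_cdf_l1 abs_minus_commute)

lemma W1_triangle:
  assumes "real_distribution \<mu>" "real_distribution \<nu>" "real_distribution \<rho>"
  shows "W1 \<mu> \<rho> \<le> W1 \<mu> \<nu> + W1 \<nu> \<rho>"
proof -
  have [measurable]: "cdf \<mu> \<in> borel_measurable borel" "cdf \<nu> \<in> borel_measurable borel"
    "cdf \<rho> \<in> borel_measurable borel"
    using assms by (simp_all add: cdf_distribution.measurable_C cdf_distribution_def)
  have "W1 \<mu> \<rho> \<le> (\<integral>\<^sup>+t. ennreal \<bar>cdf \<mu> t - cdf \<nu> t\<bar> + ennreal \<bar>cdf \<nu> t - cdf \<rho> t\<bar> \<partial>lborel)"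
    unfolding W1_eq_cdf_l1[OF assms(1,3)]
    by (intro nn_integral_mono) (simp add: ennreal_plus[symmetric] del: ennreal_plus)
  also have "\<dots> = W1 \<mu> \<nu> + W1 \<nu> \<rho>"
    unfolding W1_eq_cdf_l1[OF assms(1,2)] W1_eq_cdf_l1[OF assms(2,3)] by (rule nn_integral_add) measurable
  finally show ?thesis .
qed

lemma real_distribution_distr_inner:
  fixes \<mu> :: "'a::euclidean_space measure"
  assumes "\<mu> \<in> space (prob_algebra borel)"
  shows "real_distribution (distr \<mu> borel (\<lambda>x. \<omega> \<bullet> x))"
proof -
  interpret prob_space \<mu> using assms by (simp add: space_prob_algebra)
  have "sets \<mu> = sets borel" using assms by (simp add: space_prob_algebra)
  then have "(\<lambda>x. \<omega> \<bullet> x) \<in> borel_measurable \<mu>" by (subst measurable_cong_sets[OF _ refl]) measurable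
  then show ?thesis by (rule real_distribution_distr)
qed

lemma cdf_distr_inner:
  fixes \<mu> :: "'a::euclidean_space measure"
  assumes "sets \<mu> = sets borel"
  shows "cdf (distr \<mu> borel (\<lambda>x. \<omega> \<bullet> x)) t = measure \<mu> {x. \<omega> \<bullet> x \<le> t}"
proof -
  have "(\<lambda>x. \<omega> \<bullet> x) \<in> borel_measurable \<mu>" by (subst measurable_cong_sets[OF assms refl]) measurable
  moreover have "space \<mu> = UNIV" using sets_eq_imp_space_eq[OF assms] by simp
  ultimately show ?thesis unfolding cdf_def by (simp add: measure_distr vimage_def)
qed

lemma measurable_measure_halfspace:
  fixes \<mu> :: "'a::euclidean_space measure"
  assumes "sigma_finite_measure \<mu>" "sets \<mu> = sets borel"
  shows "(\<lambda>p. measure \<mu> {x. fst p \<bullet> x \<le> snd p}) \<in> borel_measurable (borel \<Otimes>\<^sub>M borel)"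
proof -
  interpret sigma_finite_measure \<mu> by fact
  define H where "H = {p :: ('a \<times> real) \<times> 'a. fst (fst p) \<bullet> snd p \<le> snd (fst p)}"
  have "{p \<in> space ((borel \<Otimes>\<^sub>M borel) \<Otimes>\<^sub>M borel). fst (fst p) \<bullet> snd p \<le> snd (fst p)}
      \<in> sets ((borel \<Otimes>\<^sub>M borel) \<Otimes>\<^sub>M (borel :: 'a measure))"
    by measurable
  then have "H \<in> sets ((borel \<Otimes>\<^sub>M borel) \<Otimes>\<^sub>M \<mu>)"
    unfolding H_def by (simp add: space_pair_measure sets_pair_measure_cong[OF refl assms(2)])
  from measurable_emeasure_Pair[OF this]
  have "(\<lambda>y. enn2real (emeasure \<mu> (Pair y -` H))) \<in> borel_measurable (borel \<Otimes>\<^sub>M borel)"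
    by measurable
  moreover have "enn2real (emeasure \<mu> (Pair y -` H)) = measure \<mu> {x. fst y \<bullet> x \<le> snd y}" for y
    by (simp add: H_def measure_def vimage_def)
  ultimately show ?thesis by simp
qed

lemma measurable_W1_distr_inner:
  fixes \<mu> \<nu> :: "'a::euclidean_space measure"
  assumes \<mu>: "\<mu> \<in> space (prob_algebra borel)" and \<nu>: "\<nu> \<in> space (prob_algebra borel)"
  shows "(\<lambda>\<omega>. W1 (distr \<mu> borel (\<lambda>x. \<omega> \<bullet> x)) (distr \<nu> borel (\<lambda>x. \<omega> \<bullet> x))) \<in> borel_measurable borel"
proof -
  have sets: "sets \<mu> = sets borel" "sets \<nu> = sets borel" and "prob_space \<mu>" "prob_space \<nu>"
    using assms by (simp_all add: space_prob_algebra)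
  then have [measurable]: "(\<lambda>p. measure \<mu> {x. fst p \<bullet> x \<le> snd p}) \<in> borel_measurable (borel \<Otimes>\<^sub>M borel)"
    "(\<lambda>p. measure \<nu> {x. fst p \<bullet> x \<le> snd p}) \<in> borel_measurable (borel \<Otimes>\<^sub>M borel)"
    by (simp_all add: measurable_measure_halfspace prob_space_imp_sigma_finite)
  have "(\<lambda>p. ennreal \<bar>measure \<mu> {x. fst p \<bullet> x \<le> snd p} - measure \<nu> {x. fst p \<bullet> x \<le> snd p}\<bar>)
      \<in> borel_measurable (borel \<Otimes>\<^sub>M lborel)"
    unfolding measurable_cong_sets[OF sets_pair_measure_cong[OF refl sets_lborel] refl]
    by measurable
  from lborel.borel_measurable_nn_integral_fst[OF this] show ?thesis
    by (simp add: W1_eq_cdf_l1 real_distribution_distr_inner cdf_distr_inner assms sets)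
qed

lemma sets_sphere_unif: "sets sphere_unif = sets borel"
  by (simp add: sphere_unif_def)

lemma dSW_commute:
  assumes "\<mu> \<in> space (prob_algebra borel)" "\<nu> \<in> space (prob_algebra borel)"
  shows "dSW \<mu> \<nu> = dSW \<nu> \<mu>"
  unfolding dSW_def using assms by (intro nn_integral_cong W1_commute real_distribution_distr_inner)

lemma dSW_triangle:
  assumes "\<mu> \<in> space (prob_algebra borel)" "\<nu> \<in> space (prob_algebra borel)"
    "\<rho> \<in> space (prob_algebra borel)"
  shows "dSW \<mu> \<rho> \<le> dSW \<mu> \<nu> + dSW \<nu> \<rho>"
proof -
  have "dSW \<mu> \<rho> \<le> (\<integral>\<^sup>+\<omega>. W1 (distr \<mu> borel (\<lambda>x. \<omega> \<bullet> x)) (distr \<nu> borel (\<lambda>x. \<omega> \<bullet> x))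
      + W1 (distr \<nu> borel (\<lambda>x. \<omega> \<bullet> x)) (distr \<rho> borel (\<lambda>x. \<omega> \<bullet> x)) \<partial>sphere_unif)"
    unfolding dSW_def using assms by (intro nn_integral_mono W1_triangle real_distribution_distr_inner)
  also have "\<dots> = dSW \<mu> \<nu> + dSW \<nu> \<rho>"
    unfolding dSW_def using measurable_W1_distr_inner assms
    by (intro nn_integral_add) (simp_all add: measurable_cong_sets[OF sets_sphere_unif refl])
  finally show ?thesis .
qed

lemma dSW_minimum_distance_bound:
  assumes "P \<in> space (prob_algebra borel)" "P' \<in> space (prob_algebra borel)"
    "Q \<in> space (prob_algebra borel)" "Q' \<in> space (prob_algebra borel)" "R \<in> space (prob_algebra borel)"
    and closer: "dSW Q R \<le> dSW Q' R"
  shows "dSW P P' \<le> dSW Q P + dSW Q' P' + 2 * dSW R P'"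
proof -
  have "dSW P P' \<le> dSW P Q + dSW Q P'" by (rule dSW_triangle) fact+
  also have "dSW Q P' \<le> dSW Q R + dSW R P'" by (rule dSW_triangle) fact+
  also have "dSW Q R \<le> dSW Q' R" by (fact closer)
  also have "dSW Q' R \<le> dSW Q' P' + dSW P' R" by (rule dSW_triangle) fact+
  also have "dSW P Q = dSW Q P" by (rule dSW_commute) fact+
  also have "dSW P' R = dSW R P'" by (rule dSW_commute) fact+
  finally show ?thesis by (simp add: add_mono mult_2 add.assoc)
qed

lemma emp_measure_in_prob_algebra:
  assumes "0 < k"
  shows "emp_measure k x \<in> space (prob_algebra borel)"
proof -
  have "x \<in> uniform_count_measure {..<k} \<rightarrow>\<^sub>M borel"
    by (subst measurable_cong_sets[OF sets_uniform_count_measure_count_space refl]) simp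
  moreover have "prob_space (uniform_count_measure {..<k})"
    using assms by (intro prob_space_uniform_count_measure) auto
  ultimately show ?thesis
    unfolding emp_measure_def by (simp add: space_prob_algebra prob_space.prob_space_distr)
qed

definition uniform_deviation ::
    "'z measure \<Rightarrow> ('b \<Rightarrow> 'z \<Rightarrow> 'a::euclidean_space) \<Rightarrow> 'b set \<Rightarrow> nat \<Rightarrow> (nat \<Rightarrow> 'z) \<Rightarrow> ennreal" where
  "uniform_deviation PZ \<tau> \<Theta> k z =
    (SUP \<theta>\<in>\<Theta>. dSW (emp_measure k (\<lambda>j. \<tau> \<theta> (z j))) (distr PZ borel (\<tau> \<theta>)))"

lemma estimation_error_le:
  fixes \<tau> :: "'b::real_normed_vector \<Rightarrow> 'z \<Rightarrow> 'a::euclidean_space"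
  assumes PZ: "prob_space PZ" and meas: "\<And>\<theta>. \<theta> \<in> \<Theta> \<Longrightarrow> \<tau> \<theta> \<in> PZ \<rightarrow>\<^sub>M borel"
    and \<theta>: "\<theta> \<in> \<Theta>" and \<theta>': "\<theta>' \<in> \<Theta>" and "0 < m" "0 < n" "0 \<le> C" "0 \<le> a" "0 \<le> b"
    and ident: "ennreal (norm (\<theta> - \<theta>')) \<le> ennreal C * dSW (distr PZ borel (\<tau> \<theta>)) (distr PZ borel (\<tau> \<theta>'))"
    and closer: "dSW (emp_measure m (\<lambda>j. \<tau> \<theta> (z j))) (emp_measure n (\<lambda>i. \<tau> \<theta>' (zs i)))
      \<le> dSW (emp_measure m (\<lambda>j. \<tau> \<theta>' (z j))) (emp_measure n (\<lambda>i. \<tau> \<theta>' (zs i)))"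
    and dev_m: "uniform_deviation PZ \<tau> \<Theta> m z \<le> ennreal a"
    and dev_n: "uniform_deviation PZ \<tau> \<Theta> n zs \<le> ennreal b"
  shows "norm (\<theta> - \<theta>') \<le> 2 * C * (a + b)"
proof -
  let ?P = "\<lambda>\<theta>. distr PZ borel (\<tau> \<theta>)" and ?Q = "\<lambda>k w \<theta>. emp_measure k (\<lambda>j. \<tau> \<theta> (w j))"
  have P: "?P \<theta> \<in> space (prob_algebra borel)" if "\<theta> \<in> \<Theta>" for \<theta>
    using meas[OF that] PZ by (simp add: space_prob_algebra prob_space.prob_space_distr)
  have Q: "?Q k w \<theta> \<in> space (prob_algebra borel)" if "0 < k" for k w \<theta>
    using that by (rule emp_measure_in_prob_algebra)
  have dev: "dSW (?Q k w \<theta>) (?P \<theta>) \<le> uniform_deviation PZ \<tau> \<Theta> k w" if "\<theta> \<in> \<Theta>" for k w \<theta>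
    unfolding uniform_deviation_def using that by (rule SUP_upper)
  have dev_bounds: "dSW (?Q m z \<theta>) (?P \<theta>) \<le> ennreal a" "dSW (?Q m z \<theta>') (?P \<theta>') \<le> ennreal a"
    "dSW (?Q n zs \<theta>') (?P \<theta>') \<le> ennreal b"
    using dev[OF \<theta>] dev[OF \<theta>'] dev_m dev_n by (blast intro: order.trans)+
  have "ennreal (norm (\<theta> - \<theta>')) \<le> ennreal C * dSW (?P \<theta>) (?P \<theta>')" by (fact ident)
  also have "\<dots> \<le> ennreal C * (ennreal a + ennreal a + 2 * ennreal b)"
  proof (rule mult_left_mono)
    have "dSW (?P \<theta>) (?P \<theta>')
        \<le> dSW (?Q m z \<theta>) (?P \<theta>) + dSW (?Q m z \<theta>') (?P \<theta>') + 2 * dSW (?Q n zs \<theta>') (?P \<theta>')"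
      by (rule dSW_minimum_distance_bound[OF P[OF \<theta>] P[OF \<theta>'] Q Q Q closer]) fact+
    also have "\<dots> \<le> ennreal a + ennreal a + 2 * ennreal b"
      using dev_bounds by (intro add_mono mult_left_mono) auto
    finally show "dSW (?P \<theta>) (?P \<theta>') \<le> ennreal a + ennreal a + 2 * ennreal b" .
  qed simp
  also have "\<dots> = ennreal (C * (a + a + 2 * b))"
    using \<open>0 \<le> C\<close> \<open>0 \<le> a\<close> \<open>0 \<le> b\<close>
    by (simp only: ennreal_plus ennreal_mult add_nonneg_nonneg mult_nonneg_nonneg ennreal_numeral zero_le_numeral)
  finally have "norm (\<theta> - \<theta>') \<le> C * (a + a + 2 * b)"
    using \<open>0 \<le> C\<close> \<open>0 \<le> a\<close> \<open>0 \<le> b\<close> by simp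
  then show ?thesis by (simp add: algebra_simps)
qed

lemma bdd_below_outer_prob_covers:
  "bdd_below (measure M ` {B \<in> sets M. A \<inter> space M \<subseteq> B})"
  by (intro bdd_belowI[of _ 0]) auto

lemma outer_prob_le_measure:
  assumes "B \<in> sets M" "A \<inter> space M \<subseteq> B"
  shows "outer_prob M A \<le> measure M B"
  unfolding outer_prob_def using assms by (intro cINF_lower bdd_below_outer_prob_covers) auto

lemma outer_prob_less_imp_cover:
  assumes "outer_prob M A < e"
  obtains B where "B \<in> sets M" "A \<inter> space M \<subseteq> B" "measure M B < e"
  using assms unfolding outer_prob_def by (subst (asm) cINF_less_iff[OF _ bdd_below_outer_prob_covers]) auto

lemma outer_prob_pair_union_bound:
  assumes X: "prob_space X" and Y: "prob_space Y"
    and A: "outer_prob X A < a" and B: "outer_prob Y B < b"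
    and E: "\<And>x y. x \<in> space X \<Longrightarrow> y \<in> space Y \<Longrightarrow> (x, y) \<in> E \<Longrightarrow> x \<in> A \<or> y \<in> B"
  shows "outer_prob (X \<Otimes>\<^sub>M Y) E < a + b"
proof -
  interpret X: prob_space X by fact
  interpret Y: prob_space Y by fact
  interpret XY: pair_prob_space X Y ..
  obtain A' where A': "A' \<in> sets X" "A \<inter> space X \<subseteq> A'" "measure X A' < a"
    using A by (rule outer_prob_less_imp_cover)
  obtain B' where B': "B' \<in> sets Y" "B \<inter> space Y \<subseteq> B'" "measure Y B' < b"
    using B by (rule outer_prob_less_imp_cover)
  have sets: "A' \<times> space Y \<in> sets (X \<Otimes>\<^sub>M Y)" "space X \<times> B' \<in> sets (X \<Otimes>\<^sub>M Y)"
    using A' B' by auto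
  have "E \<inter> space (X \<Otimes>\<^sub>M Y) \<subseteq> A' \<times> space Y \<union> space X \<times> B'"
    using E A' B' by (fastforce simp: space_pair_measure)
  then have "outer_prob (X \<Otimes>\<^sub>M Y) E \<le> measure (X \<Otimes>\<^sub>M Y) (A' \<times> space Y \<union> space X \<times> B')"
    using sets by (intro outer_prob_le_measure) auto
  also have "\<dots> \<le> measure (X \<Otimes>\<^sub>M Y) (A' \<times> space Y) + measure (X \<Otimes>\<^sub>M Y) (space X \<times> B')"
    using sets by (intro measure_subadditive) (auto simp: XY.emeasure_eq_measure)
  also have "\<dots> = measure X A' + measure Y B'"
    using A'(1) B'(1)
    by (simp add: measure_def Y.emeasure_pair_measure_Times X.emeasure_space_1 Y.emeasure_space_1)
  finally show ?thesis using A'(3) B'(3) by simp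
qed

theorem theorem2:
  fixes PZ :: "'z measure"
    and \<tau> :: "'b::real_normed_vector \<Rightarrow> 'z \<Rightarrow> 'a::euclidean_space"
    and \<Theta> :: "'b set"
    and \<theta>star :: 'b
    and C :: real
    and \<theta>hat :: "nat \<Rightarrow> nat \<Rightarrow> (nat \<Rightarrow> 'z) \<Rightarrow> (nat \<Rightarrow> 'z) \<Rightarrow> 'b"
  assumes PZ: "prob_space PZ"
    and meas: "\<And>\<theta>. \<theta> \<in> \<Theta> \<Longrightarrow> \<tau> \<theta> \<in> PZ \<rightarrow>\<^sub>M borel"
    and \<theta>star: "\<theta>star \<in> \<Theta>"
    and C: "C > 0"
    and ident: "\<And>\<theta>1 \<theta>2. \<theta>1 \<in> \<Theta> \<Longrightarrow> \<theta>2 \<in> \<Theta> \<Longrightarrow>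
        ennreal (norm (\<theta>1 - \<theta>2)) \<le> ennreal C * dSW (distr PZ borel (\<tau> \<theta>1)) (distr PZ borel (\<tau> \<theta>2))"
    and unif: "\<And>\<epsilon>. \<epsilon> > 0 \<Longrightarrow> \<exists>M N. \<forall>k\<ge>N.
        outer_prob (PiM {..<k} (\<lambda>_. PZ))
          {z. (SUP \<theta>\<in>\<Theta>. dSW (emp_measure k (\<lambda>j. \<tau> \<theta> (z j))) (distr PZ borel (\<tau> \<theta>)))
               > ennreal (M / sqrt (real k))} < \<epsilon>"
    and argmin: "\<And>m n zs z. zs \<in> space (PiM {..<n} (\<lambda>_. PZ)) \<Longrightarrow> z \<in> space (PiM {..<m} (\<lambda>_. PZ)) \<Longrightarrow>
        \<theta>hat m n zs z \<in> \<Theta> \<and>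
        (\<forall>\<theta>\<in>\<Theta>. dSW (emp_measure m (\<lambda>j. \<tau> (\<theta>hat m n zs z) (z j))) (emp_measure n (\<lambda>i. \<tau> \<theta>star (zs i)))
                 \<le> dSW (emp_measure m (\<lambda>j. \<tau> \<theta> (z j))) (emp_measure n (\<lambda>i. \<tau> \<theta>star (zs i))))"
  shows "\<forall>\<epsilon>>0. \<exists>M N. \<forall>m\<ge>N. \<forall>n\<ge>N.
    outer_prob (PiM {..<n} (\<lambda>_. PZ) \<Otimes>\<^sub>M PiM {..<m} (\<lambda>_. PZ))
      {(zs, z). norm (\<theta>hat m n zs z - \<theta>star) > M * (1 / sqrt (real n) + 1 / sqrt (real m))} < \<epsilon>"
proof (intro allI impI)
  fix \<epsilon> :: real
  assume "\<epsilon> > 0"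
  let ?D = "uniform_deviation PZ \<tau> \<Theta>" and ?Z = "\<lambda>k. PiM {..<k} (\<lambda>_. PZ)"
  obtain M N where dev: "\<And>k. k \<ge> N \<Longrightarrow> outer_prob (?Z k) {z. ?D k z > ennreal (M / sqrt k)} < \<epsilon> / 2"
    using unif[of "\<epsilon> / 2"] \<open>\<epsilon> > 0\<close> unfolding uniform_deviation_def by auto
  define M' where "M' = max M 0"
  have small_dev: "?D k z \<le> ennreal (M' / sqrt k)" if "\<not> ?D k z > ennreal (M / sqrt k)" for k z
    using that order.trans[OF _ ennreal_leI[of "M / sqrt k" "M' / sqrt k"]]
    by (auto simp: M'_def not_less divide_right_mono)
  have "outer_prob (?Z n \<Otimes>\<^sub>M ?Z m)
      {(zs, z). norm (\<theta>hat m n zs z - \<theta>star) > 2 * C * M' * (1 / sqrt n + 1 / sqrt m)} < \<epsilon> / 2 + \<epsilon> / 2"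
    if "m \<ge> max N 1" "n \<ge> max N 1" for m n
  proof (rule outer_prob_pair_union_bound[OF prob_space_PiM prob_space_PiM dev dev])
    fix zs z
    assume zs: "zs \<in> space (?Z n)" and z: "z \<in> space (?Z m)"
      and bad: "(zs, z) \<in> {(zs, z). norm (\<theta>hat m n zs z - \<theta>star) > 2 * C * M' * (1 / sqrt n + 1 / sqrt m)}"
    show "zs \<in> {z. ?D n z > ennreal (M / sqrt n)} \<or> z \<in> {z. ?D m z > ennreal (M / sqrt m)}"
    proof (rule ccontr)
      assume "\<not> ?thesis"
      then have "?D m z \<le> ennreal (M' / sqrt m)" "?D n zs \<le> ennreal (M' / sqrt n)"
        by (auto intro: small_dev)
      then have "norm (\<theta>hat m n zs z - \<theta>star) \<le> 2 * C * (M' / sqrt m + M' / sqrt n)"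
        using argmin[OF zs z] \<theta>star that C
        by (intro estimation_error_le[where PZ = PZ and \<tau> = \<tau> and \<Theta> = \<Theta> and m = m and n = n
              and z = z and zs = zs, OF PZ meas])
          (auto simp: ident M'_def)
      with bad show False by (simp add: field_simps)
    qed
  qed (use PZ that in auto)
  then show "\<exists>M N. \<forall>m\<ge>N. \<forall>n\<ge>N. outer_prob (?Z n \<Otimes>\<^sub>M ?Z m)
      {(zs, z). norm (\<theta>hat m n zs z - \<theta>star) > M * (1 / sqrt (real n) + 1 / sqrt (real m))} < \<epsilon>"
    by (intro exI[of _ "2 * C * M'"] exI[of _ "max N 1"]) auto
qed

end
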